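(* Let $G$ be a game and $\epsilon\ge 0$. The negotiation function $\mathrm{nego}$ of $G$ has a least $\epsilon$-fixed point (for the pointwise order on requirements).
   Context: A game is a tuple $G=(\Pi,V,(V_i)_{i\in\Pi},E,\mu)$ where $\Pi$ is a finite set of players, $(V,E)$ is a finite directed graph in which every vertex has at least one outgoing edge, $(V_i)_{i\in\Pi}$ is a partition of $V$, and $\mu:V^\omega\to\mathbb{R}^\Pi$ is the outcome function. Plays, histories, strategies, strategy profiles, compatibility, $\langle\bar\sigma\rangle_v$ (the play from $v$ generated by a complete profile $\bar\sigma$) and $\bar\sigma_{\|hw}$ (the profile $\sigma_{j\|hw}(h')=\sigma_j(hh')$) are as usual in turn-based games on graphs; $-i$ denotes $\Pi\setminus\{i\}$. A requirement is a map $\lambda:V\to\mathbb{R}\cup\{\pm\infty\}$; requirements are ordered pointwise. A play $\rho$ is $\lambda$-consistent if for every $i\in\Pi$ and every $n$ with $\rho_n\in V_i$, $\mu_i(\rho_n\rho_{n+1}\cdots)\ge\lambda(\rho_n)$. For a player $i$ and vertex $v$, $\lambda\mathrm{Rat}_i(v)$ is the set of profiles $\bar\sigma_{-i}$ in $G_{\|v}$ for which there exists a strategy $\sigma_i$ such that for every history $hw$ from $v$ compatible with $\bar\sigma_{-i}$, the play $\langle\bar\sigma_{\|hw}\rangle_w$ (with $\bar\sigma=(\bar\sigma_{-i},\sigma_i)$) is $\lambda$-consistent. The negotiation function is defined, for $i\in\Pi$ and $v\in V_i$, by $\mathrm{nego}(\lambda)(v)=\inf_{\bar\sigma_{-i}\in\lambda\mathrm{Rat}_i(v)}\sup_{\sigma_i}\mu_i(\langle\bar\sigma_{-i},\sigma_i\rangle_v)$,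 with $\inf\emptyset=+\infty$. For $\epsilon\ge0$, a requirement $\lambda$ is an $\epsilon$-fixed point of $\mathrm{nego}$ if for every $v\in V$, $\lambda(v)-\epsilon\le\mathrm{nego}(\lambda)(v)\le\lambda(v)+\epsilon$ (with $\pm\infty\pm\epsilon=\pm\infty$; in particular the constant requirement $+\infty$ is an $\epsilon$-fixed point). *)

theory Defs
  imports Main "HOL-Library.Extended_Real"
begin

(* A game: players Pi, vertices V, owner function (encodes the partition (V_i)),
   edges E, outcome mu :: play => player => real. *)
definition game :: "'p set \<Rightarrow> 'v set \<Rightarrow> ('v \<Rightarrow> 'p) \<Rightarrow> ('v \<times> 'v) set \<Rightarrow> bool" where
  "game Pi V own E \<longleftrightarrow> finite Pi \<and> finite V \<and> E \<subseteq> V \<times> V \<and>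
     (\<forall>v\<in>V. \<exists>w. (v, w) \<in> E) \<and> (\<forall>v\<in>V. own v \<in> Pi)"

definition is_hist :: "'v set \<Rightarrow> ('v \<times> 'v) set \<Rightarrow> 'v list \<Rightarrow> bool" where
  "is_hist V E h \<longleftrightarrow> h \<noteq> [] \<and> set h \<subseteq> V \<and>
     (\<forall>k. Suc k < length h \<longrightarrow> (h ! k, h ! Suc k) \<in> E)"

definition is_strat :: "'v set \<Rightarrow> ('v \<times> 'v) set \<Rightarrow> ('v \<Rightarrow> 'p) \<Rightarrow> 'p \<Rightarrow> ('v list \<Rightarrow> 'v) \<Rightarrow> bool" where
  "is_strat V E own i \<sigma> \<longleftrightarrow>
     (\<forall>h. is_hist V E h \<and> own (last h) = i \<longrightarrow> (last h, \<sigma> h) \<in> E)"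

fun gen_hist :: "('v \<Rightarrow> 'p) \<Rightarrow> ('p \<Rightarrow> 'v list \<Rightarrow> 'v) \<Rightarrow> 'v \<Rightarrow> nat \<Rightarrow> 'v list" where
  "gen_hist own \<sigma>s v 0 = [v]"
| "gen_hist own \<sigma>s v (Suc n) =
     (let h = gen_hist own \<sigma>s v n in h @ [\<sigma>s (own (last h)) h])"

definition outcome_play :: "('v \<Rightarrow> 'p) \<Rightarrow> ('p \<Rightarrow> 'v list \<Rightarrow> 'v) \<Rightarrow> 'v \<Rightarrow> nat \<Rightarrow> 'v" where
  "outcome_play own \<sigma>s v n = last (gen_hist own \<sigma>s v n)"

(* sigma_{|hw}: sigma_j|hw (h') = sigma_j (h h'), h' starting at w *)
definition prof_shift :: "('p \<Rightarrow> 'v list \<Rightarrow> 'v) \<Rightarrow> 'v list \<Rightarrow> ('p \<Rightarrow> 'v list \<Rightarrow> 'v)" where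
  "prof_shift \<sigma>s hw = (\<lambda>j h'. \<sigma>s j (butlast hw @ h'))"

definition compat_minus :: "('v \<Rightarrow> 'p) \<Rightarrow> 'p \<Rightarrow> ('p \<Rightarrow> 'v list \<Rightarrow> 'v) \<Rightarrow> 'v list \<Rightarrow> bool" where
  "compat_minus own i \<sigma>s hw \<longleftrightarrow>
     (\<forall>k. Suc k < length hw \<and> own (hw ! k) \<noteq> i \<longrightarrow>
          hw ! Suc k = \<sigma>s (own (hw ! k)) (take (Suc k) hw))"

definition lam_consistent :: "('v \<Rightarrow> 'p) \<Rightarrow> ((nat \<Rightarrow> 'v) \<Rightarrow> 'p \<Rightarrow> real) \<Rightarrow> ('v \<Rightarrow> ereal) \<Rightarrow> (nat \<Rightarrow> 'v) \<Rightarrow> bool" where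
  "lam_consistent own mu lam \<rho> \<longleftrightarrow>
     (\<forall>n. lam (\<rho> n) \<le> ereal (mu (\<lambda>k. \<rho> (n + k)) (own (\<rho> n))))"

(* lambdaRat_i(v): profiles sigma_{-i} (represented as full profiles whose i-th
   component is irrelevant) *)
definition lamRat :: "'p set \<Rightarrow> 'v set \<Rightarrow> ('v \<Rightarrow> 'p) \<Rightarrow> ('v \<times> 'v) set \<Rightarrow>
    ((nat \<Rightarrow> 'v) \<Rightarrow> 'p \<Rightarrow> real) \<Rightarrow> ('v \<Rightarrow> ereal) \<Rightarrow> 'p \<Rightarrow> 'v \<Rightarrow> ('p \<Rightarrow> 'v list \<Rightarrow> 'v) set" where
  "lamRat Pi V own E mu lam i v =
     {\<sigma>s. (\<forall>j\<in>Pi. j \<noteq> i \<longrightarrow> is_strat V E own j (\<sigma>s j)) \<and>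
          (\<exists>\<sigma>i. is_strat V E own i \<sigma>i \<and>
             (\<forall>hw. is_hist V E hw \<and> hd hw = v \<and> compat_minus own i \<sigma>s hw \<longrightarrow>
                lam_consistent own mu lam
                  (outcome_play own (prof_shift (\<sigma>s(i := \<sigma>i)) hw) (last hw))))}"

definition nego :: "'p set \<Rightarrow> 'v set \<Rightarrow> ('v \<Rightarrow> 'p) \<Rightarrow> ('v \<times> 'v) set \<Rightarrow>
    ((nat \<Rightarrow> 'v) \<Rightarrow> 'p \<Rightarrow> real) \<Rightarrow> ('v \<Rightarrow> ereal) \<Rightarrow> 'v \<Rightarrow> ereal" where
  "nego Pi V own E mu lam v =
     (INF \<sigma>s \<in> lamRat Pi V own E mu lam (own v) v.
        SUP \<sigma>i \<in> {\<sigma>. is_strat V E own (own v) \<sigma>}.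
          ereal (mu (outcome_play own (\<sigma>s(own v := \<sigma>i)) v) (own v)))"

definition eps_fixed :: "'p set \<Rightarrow> 'v set \<Rightarrow> ('v \<Rightarrow> 'p) \<Rightarrow> ('v \<times> 'v) set \<Rightarrow>
    ((nat \<Rightarrow> 'v) \<Rightarrow> 'p \<Rightarrow> real) \<Rightarrow> real \<Rightarrow> ('v \<Rightarrow> ereal) \<Rightarrow> bool" where
  "eps_fixed Pi V own E mu eps lam \<longleftrightarrow>
     (\<forall>v\<in>V. lam v - ereal eps \<le> nego Pi V own E mu lam v \<and>
            nego Pi V own E mu lam v \<le> lam v + ereal eps)"

end

theory Submission
  imports Defs
begin

text \<open>Raising a requirement shrinks every set \<open>\<lambda>Rat\<^sub>i(v)\<close>, so \<open>nego\<close> is monotone.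
  A Knaster--Tarski argument then applies: the pointwise infimum \<open>\<lambda>\<^sub>*\<close> of all requirements
  \<open>\<lambda>\<close> with \<open>nego(\<lambda>) \<le> \<lambda> + \<epsilon>\<close> again has this property, and it also satisfies
  \<open>\<lambda>\<^sub>* - \<epsilon> \<le> nego(\<lambda>\<^sub>*)\<close>: otherwise lowering \<open>\<lambda>\<^sub>*\<close> at a single vertex to
  \<open>nego(\<lambda>\<^sub>*) + \<epsilon>\<close> would produce a strictly smaller member of the family. Every
  \<open>\<epsilon>\<close>-fixed point belongs to the family, so \<open>\<lambda>\<^sub>*\<close> is the least one.\<close>

lemma lam_consistent_antimono:
  assumes "lam \<le> lam'" "lam_consistent own mu lam' \<rho>"
  shows "lam_consistent own mu lam \<rho>"
  using assms unfolding lam_consistent_def le_fun_def by (meson order_trans)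

lemma lamRat_antimono:
  assumes "lam \<le> lam'"
  shows "lamRat Pi V own E mu lam' i v \<subseteq> lamRat Pi V own E mu lam i v"
  using lam_consistent_antimono[OF assms] unfolding lamRat_def by blast

lemma mono_nego: "mono (nego Pi V own E mu)"
proof (rule monoI, rule le_funI)
  fix lam lam' :: "'a \<Rightarrow> ereal" and v
  assume "lam \<le> lam'"
  then show "nego Pi V own E mu lam v \<le> nego Pi V own E mu lam' v"
    unfolding nego_def by (rule INF_superset_mono[OF lamRat_antimono]) simp
qed

definition eps_prefixed ::
    "(('a \<Rightarrow> ereal) \<Rightarrow> 'a \<Rightarrow> ereal) \<Rightarrow> 'a set \<Rightarrow> real \<Rightarrow> ('a \<Rightarrow> ereal) \<Rightarrow> bool" where
  "eps_prefixed F A e l \<longleftrightarrow> (\<forall>v\<in>A. F l v \<le> l v + ereal e)"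

lemma eps_prefixed_Inf:
  assumes "mono F" and "\<And>l. l \<in> S \<Longrightarrow> eps_prefixed F A e l"
  shows "eps_prefixed F A e (Inf S)"
  unfolding eps_prefixed_def
proof
  fix v assume "v \<in> A"
  have "F (Inf S) v - ereal e \<le> l v" if "l \<in> S" for l
  proof -
    have "F (Inf S) v \<le> F l v"
      using monoD[OF \<open>mono F\<close> Inf_lower[OF that]] by (simp add: le_fun_def)
    also have "\<dots> \<le> l v + ereal e"
      using assms(2)[OF that] \<open>v \<in> A\<close> unfolding eps_prefixed_def by blast
    finally show ?thesis by (simp add: ereal_minus_le)
  qed
  then have "F (Inf S) v - ereal e \<le> Inf S v"
    by (simp add: Inf_apply INF_greatest)
  then show "F (Inf S) v \<le> Inf S v + ereal e"
    by (simp add: ereal_minus_le)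
qed

text \<open>Only here is \<open>e \<ge> 0\<close> needed: the lowered requirement must stay \<open>e\<close>-prefixed at the
  modified vertex.\<close>

lemma least_eps_prefixed_lower_bound:
  assumes "mono F" and "e \<ge> 0" and "eps_prefixed F A e l"
    and least: "\<And>l'. eps_prefixed F A e l' \<Longrightarrow> l \<le> l'"
    and "v \<in> A"
  shows "l v - ereal e \<le> F l v"
proof (rule ccontr)
  assume "\<not> l v - ereal e \<le> F l v"
  then have below: "F l v + ereal e < l v"
    by (simp add: ereal_less_minus not_le)
  define l' where "l' = l(v := F l v + ereal e)"
  have "l' \<le> l"
    using below unfolding l'_def le_fun_def by auto
  then have F_le: "F l' u \<le> F l u" for u
    using monoD[OF \<open>mono F\<close>] by (simp add: le_fun_def)
  have "F l v \<le> F l v + ereal e + ereal e"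
    using \<open>e \<ge> 0\<close> by (cases "F l v") auto
  then have "eps_prefixed F A e l'"
    using F_le \<open>eps_prefixed F A e l\<close> unfolding eps_prefixed_def l'_def
    by (auto intro: order_trans)
  then have "l v \<le> l' v"
    using least by (simp add: le_fun_def)
  then show False
    using below unfolding l'_def by simp
qed

lemma least_eps_fixed_point_exists:
  fixes F :: "('a \<Rightarrow> ereal) \<Rightarrow> 'a \<Rightarrow> ereal" and A :: "'a set" and e :: real
  assumes "mono F" and "e \<ge> 0"
  defines "fixed l \<equiv> \<forall>v\<in>A. l v - ereal e \<le> F l v \<and> F l v \<le> l v + ereal e"
  shows "\<exists>l. fixed l \<and> (\<forall>l'. fixed l' \<longrightarrow> (\<forall>v\<in>A. l v \<le> l' v))"
proof (intro exI conjI allI impI ballI)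
  define S where "S = Collect (eps_prefixed F A e)"
  have prefixed: "eps_prefixed F A e (Inf S)"
    using eps_prefixed_Inf[OF \<open>mono F\<close>] unfolding S_def by blast
  have least: "Inf S \<le> l'" if "eps_prefixed F A e l'" for l'
    using that unfolding S_def by (simp add: Inf_lower)
  show "fixed (Inf S)"
    using prefixed least_eps_prefixed_lower_bound[OF assms(1,2) prefixed least]
    unfolding fixed_def eps_prefixed_def by blast
  fix l' v assume "fixed l'" and "v \<in> A"
  then have "eps_prefixed F A e l'"
    unfolding fixed_def eps_prefixed_def by blast
  then show "Inf S v \<le> l' v"
    using least by (simp add: le_fun_def)
qed

theorem mainTheorem2:
  fixes Pi :: "'p set" and V :: "'v set" and own :: "'v \<Rightarrow> 'p"
    and E :: "('v \<times> 'v) set" and mu :: "(nat \<Rightarrow> 'v) \<Rightarrow> 'p \<Rightarrow> real" and eps :: real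
  assumes "game Pi V own E" and "eps \<ge> 0"
  shows "\<exists>lam. eps_fixed Pi V own E mu eps lam \<and>
           (\<forall>lam'. eps_fixed Pi V own E mu eps lam' \<longrightarrow> (\<forall>v\<in>V. lam v \<le> lam' v))"
  using least_eps_fixed_point_exists[OF mono_nego \<open>eps \<ge> 0\<close>, where A = V]
  unfolding eps_fixed_def .

end
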